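(* Let $\alpha=1$, $j\ne0$, and $$G(x)=p_0+p_1\cos(2\pi x)+q_1\sin(2\pi x),\qquad V(x)=v_0+v_1\cos(2\pi x)+w_1\sin(2\pi x),$$ with real coefficients, $p_0>0$, $p_1\ge0$. Then there is a unique $r\ge1$ with $$\left(1-\frac1r\right)\left((p_1+j^2r)^2+q_1^2\right)=v_1^2+w_1^2.$$ Define $$a_0=2r-1,\quad \overline{H}=\frac{j^2(2r-1)}{2}+v_0-p_0,\quad a_1=-\frac{2r\big(v_1(p_1+j^2r)+w_1q_1\big)}{(p_1+j^2r)^2+q_1^2},\quad b_1=-\frac{2r\big(w_1(p_1+j^2r)-v_1q_1\big)}{(p_1+j^2r)^2+q_1^2}.$$ Then, with $m(x)=\dfrac{1}{a_0+a_1\cos(2\pi x)+b_1\sin(2\pi x)}$, the pair $(m,\overline{H})$ is the unique solution of problem (P) (with $\alpha=1$).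
   Context: $\mathbb{T}=\mathbb{R}/\mathbb{Z}$. Problem (P): given $0<\alpha\le2$, $j\ne0$, $V,G\in C^2(\mathbb{T})$, find $(m,\overline{H})\in C(\mathbb{T})\times\mathbb{R}$ with $m>0$ on $\mathbb{T}$, $\int_{\mathbb{T}}m=1$, and $\frac{j^2}{2m(x)^\alpha}+V(x)=\int_{\mathbb{T}}G(x-y)m(y)\,dy+\overline{H}$ for all $x\in\mathbb{T}$. *)

theory Defs
  imports "HOL-Analysis.Analysis"
begin

text \<open>Functions on the torus T = R/Z are represented as 1-periodic functions on the reals.\<close>

definition periodic1 :: "(real \<Rightarrow> real) \<Rightarrow> bool" where
  "periodic1 f \<longleftrightarrow> (\<forall>x. f (x + 1) = f x)"

text \<open>(m, Hbar) solves problem (P) with data alpha, j, V, G.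
  Integration over T is integration over the period [0,1].\<close>

definition solves_P ::
  "real \<Rightarrow> real \<Rightarrow> (real \<Rightarrow> real) \<Rightarrow> (real \<Rightarrow> real) \<Rightarrow> (real \<Rightarrow> real) \<Rightarrow> real \<Rightarrow> bool" where
  "solves_P \<alpha> j V G m H \<longleftrightarrow>
     continuous_on UNIV m \<and> periodic1 m \<and> (\<forall>x. m x > 0) \<and>
     integral {0..1} m = 1 \<and>
     (\<forall>x. j\<^sup>2 / (2 * m x powr \<alpha>) + V x = integral {0..1} (\<lambda>y. G (x - y) * m y) + H)"

end

theory Submission
  imports Defs
begin

text \<open>For \<open>\<alpha> = 1\<close> and first-order Fourier data the convolution \<open>G * m\<close> only sees the mass and
  the first two Fourier moments of \<open>m\<close>, so the equation forces \<open>1/m\<close> to be a first-order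
  trigonometric polynomial \<open>a\<^sub>0 + a\<^sub>1 cos + b\<^sub>1 sin\<close>. For such \<open>m\<close>, normalised by
  \<open>a\<^sub>0\<^sup>2 - a\<^sub>1\<^sup>2 - b\<^sub>1\<^sup>2 = 1\<close>, the mass is \<open>1\<close> and the moments are \<open>-a\<^sub>1/(a\<^sub>0+1)\<close>, \<open>-b\<^sub>1/(a\<^sub>0+1)\<close>;
  matching coefficients then reduces everything to the scalar equation for \<open>r = (a\<^sub>0+1)/2\<close>,
  whose left-hand side is strictly increasing on \<open>[1,\<infinity>)\<close>.
  Uniqueness is a monotonicity argument: for two solutions, testing the difference of the
  equations against \<open>m\<^sub>1 - m\<^sub>2\<close> gives \<open>\<integral>(1/m\<^sub>1 - 1/m\<^sub>2)(m\<^sub>1 - m\<^sub>2) = 2p\<^sub>1/j\<^sup>2 \<cdot> |\<Delta>moments|\<^sup>2 \<ge> 0\<close>,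
  although the integrand is pointwise \<open>\<le> 0\<close>; hence it vanishes and \<open>m\<^sub>1 = m\<^sub>2\<close>.\<close>

lemma has_integral_DERIV:
  fixes F f :: "real \<Rightarrow> real"
  assumes "a \<le> b" "\<And>x. (F has_real_derivative f x) (at x)"
  shows "(f has_integral F b - F a) {a..b}"
  using assms by (intro fundamental_theorem_of_calculus)
    (auto simp flip: has_real_derivative_iff_has_vector_derivative intro: has_field_derivative_at_within)

section \<open>First-order trigonometric polynomials\<close>

definition trig_poly1 :: "real \<Rightarrow> real \<Rightarrow> real \<Rightarrow> real \<Rightarrow> real" where
  "trig_poly1 a b c x = a + b * cos (2 * pi * x) + c * sin (2 * pi * x)"

lemma trig_poly1_periodic: "trig_poly1 a b c (x + 1) = trig_poly1 a b c x"
  by (simp add: trig_poly1_def distrib_left)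

lemma continuous_on_trig_poly1 [continuous_intros]:
  "continuous_on S (trig_poly1 a b c)"
  unfolding trig_poly1_def[abs_def] by (intro continuous_intros)

lemma cos_sin_rotation_sq:
  "(b * cos t + c * sin t)\<^sup>2 + (b * sin t - c * cos t)\<^sup>2 = b\<^sup>2 + c\<^sup>2" for b c t :: real
  using sin_cos_squared_add[of t] by algebra

lemma trig_poly1_pos:
  assumes "b\<^sup>2 + c\<^sup>2 < a\<^sup>2" "a > 0"
  shows "trig_poly1 a b c x > 0"
proof -
  define t where "t = 2 * pi * x"
  have "(b * cos t + c * sin t)\<^sup>2 < a\<^sup>2"
    using cos_sin_rotation_sq[of b t c] assms(1) zero_le_power2[of "b * sin t - c * cos t"] by linarith
  then have "\<bar>b * cos t + c * sin t\<bar> < a"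
    using power2_less_imp_less[of "\<bar>b * cos t + c * sin t\<bar>" a] assms(2) by simp
  then show ?thesis by (simp add: trig_poly1_def t_def)
qed

lemma has_real_derivative_trig_poly1:
  "(trig_poly1 a b c has_real_derivative 2 * pi * (c * cos (2 * pi * x) - b * sin (2 * pi * x))) (at x)"
  unfolding trig_poly1_def[abs_def] by (auto intro!: derivative_eq_intros simp: algebra_simps)

lemma DERIV_arctan_divide:
  fixes f g :: "real \<Rightarrow> real"
  assumes "(f has_real_derivative f') (at x)" "(g has_real_derivative g') (at x)" "g x \<noteq> 0"
  shows "((\<lambda>x. arctan (f x / g x)) has_real_derivative
           (f' * g x - f x * g') / ((g x)\<^sup>2 + (f x)\<^sup>2)) (at x)"
proof -
  have "((\<lambda>x. arctan (f x / g x)) has_real_derivative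
      inverse (1 + (f x / g x)\<^sup>2) * ((f' * g x - f x * g') / (g x * g x))) (at x)"
    by (rule DERIV_chain2[OF DERIV_arctan DERIV_divide[OF assms]])
  moreover have "inverse (1 + (f x / g x)\<^sup>2) = (g x)\<^sup>2 / ((g x)\<^sup>2 + (f x)\<^sup>2)"
  proof -
    have "1 + (f x / g x)\<^sup>2 = ((g x)\<^sup>2 + (f x)\<^sup>2) / (g x)\<^sup>2"
      using assms(3) by (simp add: field_simps)
    then show ?thesis by simp
  qed
  ultimately show ?thesis
    using assms(3) by (simp add: power2_eq_square)
qed

text \<open>The antiderivative given by the substitution \<open>u = tan (\<pi> x)\<close> is only piecewise
  continuous; this one is smooth on all of \<open>\<real>\<close>, so it can be integrated over a full period.\<close>

lemma antiderivative_inverse_trig_poly1: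
  fixes a b c :: real
  assumes norm: "a\<^sup>2 - b\<^sup>2 - c\<^sup>2 = 1" and "a > 0"
  shows "((\<lambda>x. x - arctan ((b * sin (2 * pi * x) - c * cos (2 * pi * x)) / (1 + trig_poly1 a b c x)) / pi)
     has_real_derivative 1 / trig_poly1 a b c x) (at x)"
proof -
  define N where "N = (\<lambda>x. b * sin (2 * pi * x) - c * cos (2 * pi * x))"
  define L where "L = trig_poly1 a b c x"
  have "L > 0" unfolding L_def using assms by (intro trig_poly1_pos) auto
  have N_sq: "(N x)\<^sup>2 = a\<^sup>2 - 1 - (L - a)\<^sup>2"
    using cos_sin_rotation_sq[of b "2 * pi * x" c] norm by (simp add: L_def N_def trig_poly1_def)
  have dN: "(N has_real_derivative 2 * pi * (L - a)) (at x)"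
    unfolding N_def L_def trig_poly1_def by (auto intro!: derivative_eq_intros simp: algebra_simps)
  have dM: "((\<lambda>x. 1 + trig_poly1 a b c x) has_real_derivative - 2 * pi * N x) (at x)"
    using has_real_derivative_trig_poly1[of a b c x] unfolding N_def
    by (auto intro!: derivative_eq_intros simp: algebra_simps)
  have "(2 * pi * (L - a) * (1 + L) - N x * (- 2 * pi * N x)) / ((1 + L)\<^sup>2 + (N x)\<^sup>2)
      = 2 * (a + 1) * (pi * (L - 1)) / (2 * (a + 1) * L)"
  proof -
    have "2 * pi * (L - a) * (1 + L) - N x * (- 2 * pi * N x) = 2 * (a + 1) * (pi * (L - 1))"
      using N_sq by algebra
    moreover have "(1 + L)\<^sup>2 + (N x)\<^sup>2 = 2 * (a + 1) * L"
      using N_sq by algebra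
    ultimately show ?thesis by (simp only:)
  qed
  also have "\<dots> = pi * (L - 1) / L"
    using \<open>a > 0\<close> by (intro mult_divide_mult_cancel_left) simp
  finally have "((\<lambda>x. arctan (N x / (1 + trig_poly1 a b c x))) has_real_derivative pi * (L - 1) / L) (at x)"
    using DERIV_arctan_divide[OF dN dM] \<open>L > 0\<close> unfolding L_def by simp
  then have "((\<lambda>x. x - arctan (N x / (1 + trig_poly1 a b c x)) / pi)
      has_real_derivative 1 - pi * (L - 1) / L / pi) (at x)"
    by (intro DERIV_diff DERIV_ident DERIV_cdivide)
  then show ?thesis
    using \<open>L > 0\<close> by (simp add: N_def L_def field_simps)
qed

lemma has_integral_inverse_trig_poly1:
  assumes "a\<^sup>2 - b\<^sup>2 - c\<^sup>2 = 1" "a > 0"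
  shows "((\<lambda>x. 1 / trig_poly1 a b c x) has_integral 1) {0..1}"
  using has_integral_DERIV[of 0 1, OF _ antiderivative_inverse_trig_poly1[OF assms]]
  by (simp add: trig_poly1_def)

lemma has_integral_log_deriv_trig_poly1:
  assumes "b\<^sup>2 + c\<^sup>2 < a\<^sup>2" "a > 0"
  shows "((\<lambda>x. (c * cos (2 * pi * x) - b * sin (2 * pi * x)) / trig_poly1 a b c x) has_integral 0) {0..1}"
proof -
  have "((\<lambda>x. ln (trig_poly1 a b c x) / (2 * pi)) has_real_derivative
      (c * cos (2 * pi * x) - b * sin (2 * pi * x)) / trig_poly1 a b c x) (at x)" for x
    using has_real_derivative_trig_poly1[of a b c x] trig_poly1_pos[OF assms, of x]
    by (auto intro!: derivative_eq_intros)
  from has_integral_DERIV[of 0 1, OF _ this] show ?thesis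
    using trig_poly1_periodic[of a b c 0] by simp
qed

lemma has_integral_cos_2pi: "((\<lambda>x. cos (2 * pi * x)) has_integral 0) {0..1}"
proof -
  have "((\<lambda>x. sin (2 * pi * x) / (2 * pi)) has_real_derivative cos (2 * pi * x)) (at x)" for x
    by (auto intro!: derivative_eq_intros)
  from has_integral_DERIV[of 0 1, OF _ this] show ?thesis by simp
qed

lemma has_integral_sin_2pi: "((\<lambda>x. sin (2 * pi * x)) has_integral 0) {0..1}"
proof -
  have "((\<lambda>x. - cos (2 * pi * x) / (2 * pi)) has_real_derivative sin (2 * pi * x)) (at x)" for x
    by (auto intro!: derivative_eq_intros)
  from has_integral_DERIV[of 0 1, OF _ this] show ?thesis by simp
qed

lemma has_integral_trig_div_trig_poly1:
  assumes norm: "a\<^sup>2 - b\<^sup>2 - c\<^sup>2 = 1" and "a > 0"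
  shows "((\<lambda>x. cos (2 * pi * x) / trig_poly1 a b c x) has_integral - b / (a + 1)) {0..1}"
    and "((\<lambda>x. sin (2 * pi * x) / trig_poly1 a b c x) has_integral - c / (a + 1)) {0..1}"
proof -
  let ?L = "trig_poly1 a b c"
  have bc: "b\<^sup>2 + c\<^sup>2 < a\<^sup>2" using norm by simp
  have L_pos: "?L x > 0" for x using trig_poly1_pos[OF bc \<open>a > 0\<close>] .
  have "continuous_on {0..1} (\<lambda>x. cos (2 * pi * x) / ?L x)"
       "continuous_on {0..1} (\<lambda>x. sin (2 * pi * x) / ?L x)"
    using L_pos by (auto intro!: continuous_intros simp: less_imp_neq[symmetric])
  then obtain Ic Is where
    Ic: "((\<lambda>x. cos (2 * pi * x) / ?L x) has_integral Ic) {0..1}" and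
    Is: "((\<lambda>x. sin (2 * pi * x) / ?L x) has_integral Is) {0..1}"
    by (meson integrable_continuous_real integrable_on_def)
  have "((\<lambda>x. b * (cos (2 * pi * x) / ?L x) + c * (sin (2 * pi * x) / ?L x)) has_integral b * Ic + c * Is) {0..1}"
    by (intro has_integral_add has_integral_mult_right Ic Is)
  moreover have "b * (cos (2 * pi * x) / ?L x) + c * (sin (2 * pi * x) / ?L x) = 1 - a * (1 / ?L x)" for x
  proof -
    have "b * (cos (2 * pi * x) / ?L x) + c * (sin (2 * pi * x) / ?L x) = (?L x - a) / ?L x"
      by (simp add: trig_poly1_def add_divide_distrib)
    also have "\<dots> = 1 - a * (1 / ?L x)"
      using L_pos[of x] by (simp add: diff_divide_distrib)
    finally show ?thesis .
  qed
  ultimately have "((\<lambda>x. 1 - a * (1 / ?L x)) has_integral b * Ic + c * Is) {0..1}"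
    by simp
  moreover have "((\<lambda>x. 1 - a * (1 / ?L x)) has_integral 1 - a) {0..1}"
    using has_integral_diff[OF has_integral_const_real[of "1::real" 0 1]
        has_integral_mult_right[OF has_integral_inverse_trig_poly1[OF norm \<open>a > 0\<close>], of a]]
    by simp
  ultimately have sum: "b * Ic + c * Is = 1 - a"
    by (rule has_integral_unique)
  have "((\<lambda>x. c * (cos (2 * pi * x) / ?L x) - b * (sin (2 * pi * x) / ?L x)) has_integral c * Ic - b * Is) {0..1}"
    by (intro has_integral_diff has_integral_mult_right Ic Is)
  moreover have "((\<lambda>x. c * (cos (2 * pi * x) / ?L x) - b * (sin (2 * pi * x) / ?L x)) has_integral 0) {0..1}"
    using has_integral_log_deriv_trig_poly1[OF bc \<open>a > 0\<close>] by (simp add: diff_divide_distrib)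
  ultimately have diff: "c * Ic - b * Is = 0"
    by (rule has_integral_unique)
  have "Ic = - b / (a + 1) \<and> Is = - c / (a + 1)"
  proof (cases "b = 0 \<and> c = 0")
    case True
    then have "a = 1" using norm \<open>a > 0\<close> by (simp add: power2_eq_1_iff)
    with True have "?L = (\<lambda>x. 1)" by (simp add: fun_eq_iff trig_poly1_def)
    then show ?thesis
      using True Ic Is has_integral_cos_2pi has_integral_sin_2pi by (auto dest: has_integral_unique)
  next
    case False
    then have "b\<^sup>2 + c\<^sup>2 > 0" by (simp add: sum_power2_gt_zero_iff)
    then have "a \<noteq> 1" using norm by auto
    have "(a - 1) * ((a + 1) * Ic + b) = 0" "(a - 1) * ((a + 1) * Is + c) = 0"
      using sum diff norm by algebra+
    then have "(a + 1) * Ic = - b" "(a + 1) * Is = - c"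
      using \<open>a \<noteq> 1\<close> by auto
    then show ?thesis
      using \<open>a > 0\<close> by (auto simp: field_simps)
  qed
  with Ic Is show "((\<lambda>x. cos (2 * pi * x) / ?L x) has_integral - b / (a + 1)) {0..1}"
    and "((\<lambda>x. sin (2 * pi * x) / ?L x) has_integral - c / (a + 1)) {0..1}"
    by auto
qed

section \<open>Reduction of problem (P) to the Fourier moments\<close>

lemma trig_poly1_diff:
  "trig_poly1 a b c (x - y) =
     trig_poly1 a (b * cos (2 * pi * x) + c * sin (2 * pi * x)) (b * sin (2 * pi * x) - c * cos (2 * pi * x)) y"
  by (simp add: trig_poly1_def right_diff_distrib cos_diff sin_diff algebra_simps)

lemma has_integral_trig_poly1_mult:
  assumes "(m has_integral I) S"
    and "((\<lambda>y. cos (2 * pi * y) * m y) has_integral C) S"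
    and "((\<lambda>y. sin (2 * pi * y) * m y) has_integral D) S"
  shows "((\<lambda>y. trig_poly1 a b c y * m y) has_integral a * I + b * C + c * D) S"
proof -
  have "((\<lambda>y. a * m y + b * (cos (2 * pi * y) * m y) + c * (sin (2 * pi * y) * m y))
      has_integral a * I + b * C + c * D) S"
    by (intro has_integral_add has_integral_mult_right assms)
  then show ?thesis
    by (simp add: trig_poly1_def algebra_simps)
qed

definition cos_moment :: "(real \<Rightarrow> real) \<Rightarrow> real" where
  "cos_moment m = integral {0..1} (\<lambda>y. cos (2 * pi * y) * m y)"

definition sin_moment :: "(real \<Rightarrow> real) \<Rightarrow> real" where
  "sin_moment m = integral {0..1} (\<lambda>y. sin (2 * pi * y) * m y)"

lemma has_integral_moments:
  assumes "continuous_on {0..1} m"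
  shows "((\<lambda>y. cos (2 * pi * y) * m y) has_integral cos_moment m) {0..1}"
    and "((\<lambda>y. sin (2 * pi * y) * m y) has_integral sin_moment m) {0..1}"
  unfolding cos_moment_def sin_moment_def
  using assms by (auto intro!: integrable_integral integrable_continuous_real continuous_intros)

lemma solves_P_trig_poly1_iff:
  assumes cont: "continuous_on UNIV m" and per: "periodic1 m" and pos: "\<And>x. m x > 0"
    and mass: "integral {0..1} m = 1"
  shows "solves_P 1 j (trig_poly1 v0 v1 w1) (trig_poly1 p0 p1 q1) m H \<longleftrightarrow>
    (\<forall>x. j\<^sup>2 / (2 * m x) = trig_poly1 (p0 + H - v0)
       (p1 * cos_moment m - q1 * sin_moment m - v1) (q1 * cos_moment m + p1 * sin_moment m - w1) x)"
proof -
  have cont01: "continuous_on {0..1} m" using cont by (rule continuous_on_subset) simp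
  then have "(m has_integral 1) {0..1}"
    using mass integrable_continuous_real has_integral_integral by metis
  note moments = has_integral_trig_poly1_mult[OF this has_integral_moments[OF cont01]]
  have conv: "integral {0..1} (\<lambda>y. trig_poly1 p0 p1 q1 (x - y) * m y) =
      p0 + (p1 * cos (2 * pi * x) + q1 * sin (2 * pi * x)) * cos_moment m
         + (p1 * sin (2 * pi * x) - q1 * cos (2 * pi * x)) * sin_moment m" for x
    unfolding trig_poly1_diff using moments by (simp add: integral_unique)
  have "j\<^sup>2 / (2 * m x powr 1) + trig_poly1 v0 v1 w1 x
      = integral {0..1} (\<lambda>y. trig_poly1 p0 p1 q1 (x - y) * m y) + H
    \<longleftrightarrow> j\<^sup>2 / (2 * m x) = trig_poly1 (p0 + H - v0)
       (p1 * cos_moment m - q1 * sin_moment m - v1) (q1 * cos_moment m + p1 * sin_moment m - w1) x" for x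
    unfolding conv using pos[of x] by (simp add: trig_poly1_def algebra_simps)
  then show ?thesis
    using cont per pos mass by (simp add: solves_P_def)
qed

section \<open>Uniqueness\<close>

lemma periodic1_frac:
  assumes "periodic1 f"
  shows "f (frac x) = f x"
proof -
  interpret periodic_fun_simple' f
    using assms by unfold_locales (simp add: periodic1_def)
  show ?thesis
    using plus_of_int[of "frac x" "\<lfloor>x\<rfloor>"] by (simp add: frac_def)
qed

lemma periodic1_eqI:
  assumes "periodic1 f" "periodic1 g" "\<And>x. x \<in> {0..1} \<Longrightarrow> f x = g x"
  shows "f = g"
proof
  fix x :: real
  have "frac x \<in> {0..1}" by (simp add: frac_ge_0 frac_lt_1 less_imp_le)
  then show "f x = g x"
    using assms periodic1_frac by metis
qed

lemma eq_if_has_integral_reciprocal_gap_nonneg: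
  fixes m1 m2 :: "real \<Rightarrow> real"
  assumes "continuous_on {a..b} m1" "continuous_on {a..b} m2" "a < b"
    and pos: "\<And>x. x \<in> {a..b} \<Longrightarrow> m1 x > 0 \<and> m2 x > 0"
    and int: "((\<lambda>x. (1 / m1 x - 1 / m2 x) * (m1 x - m2 x)) has_integral I) {a..b}" and "I \<ge> 0"
    and x: "x \<in> {a..b}"
  shows "m1 x = m2 x"
proof -
  define gap where "gap x = (m1 x - m2 x)\<^sup>2 / (m1 x * m2 x)" for x
  have gap_eq: "- ((1 / m1 x - 1 / m2 x) * (m1 x - m2 x)) = gap x" if "x \<in> {a..b}" for x
    using pos[OF that] by (simp add: gap_def field_simps power2_eq_square)
  have int_gap: "(gap has_integral - I) {a..b}"
    using has_integral_eq[OF gap_eq has_integral_neg[OF int]] .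
  have gap_nonneg: "gap x \<ge> 0" if "x \<in> {a..b}" for x
    using pos[OF that] by (simp add: gap_def)
  have "- I \<ge> 0"
    using has_integral_nonneg[OF int_gap gap_nonneg] .
  with \<open>I \<ge> 0\<close> have "(gap has_integral 0) (cbox a b)"
    using int_gap by simp
  moreover have "continuous_on (cbox a b) gap"
  proof -
    have "m1 x * m2 x \<noteq> 0" if "x \<in> {a..b}" for x
      using pos[OF that] by simp
    then show ?thesis
      unfolding gap_def[abs_def] by (auto intro!: continuous_intros assms(1,2))
  qed
  ultimately have "gap x = 0"
    using gap_nonneg \<open>a < b\<close> x by (intro has_integral_0_cbox_imp_0[of a b gap x]) auto
  then show ?thesis
    using pos[OF x] by (simp add: gap_def)
qed

lemma solves_P_trig_poly1_unique:
  assumes "j \<noteq> 0" "p1 \<ge> 0"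
    and s1: "solves_P 1 j (trig_poly1 v0 v1 w1) (trig_poly1 p0 p1 q1) m1 H1"
    and s2: "solves_P 1 j (trig_poly1 v0 v1 w1) (trig_poly1 p0 p1 q1) m2 H2"
  shows "m1 = m2 \<and> H1 = H2"
proof -
  have m1: "continuous_on UNIV m1" "periodic1 m1" "\<And>x. m1 x > 0" "integral {0..1} m1 = 1"
    and m2: "continuous_on UNIV m2" "periodic1 m2" "\<And>x. m2 x > 0" "integral {0..1} m2 = 1"
    using s1 s2 by (auto simp: solves_P_def)
  have cont: "continuous_on {0..1} m1" "continuous_on {0..1} m2"
    using m1(1) m2(1) by (auto intro: continuous_on_subset)
  define dC where "dC = cos_moment m1 - cos_moment m2"
  define dS where "dS = sin_moment m1 - sin_moment m2"
  have eq1: "\<And>x. j\<^sup>2 / (2 * m1 x) = trig_poly1 (p0 + H1 - v0)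
       (p1 * cos_moment m1 - q1 * sin_moment m1 - v1) (q1 * cos_moment m1 + p1 * sin_moment m1 - w1) x"
    using s1 solves_P_trig_poly1_iff[OF m1] by blast
  have eq2: "\<And>x. j\<^sup>2 / (2 * m2 x) = trig_poly1 (p0 + H2 - v0)
       (p1 * cos_moment m2 - q1 * sin_moment m2 - v1) (q1 * cos_moment m2 + p1 * sin_moment m2 - w1) x"
    using s2 solves_P_trig_poly1_iff[OF m2] by blast
  have recip: "1 / m1 y - 1 / m2 y = 2 / j\<^sup>2 * trig_poly1 (H1 - H2) (p1 * dC - q1 * dS) (q1 * dC + p1 * dS) y" for y
  proof -
    have "j\<^sup>2 / (2 * m1 y) - j\<^sup>2 / (2 * m2 y) = trig_poly1 (H1 - H2) (p1 * dC - q1 * dS) (q1 * dC + p1 * dS) y"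
      unfolding eq1 eq2 by (simp add: dC_def dS_def trig_poly1_def algebra_simps)
    then show ?thesis
      using \<open>j \<noteq> 0\<close> by (simp add: field_simps)
  qed
  have mass: "(m1 has_integral 1) {0..1}" "(m2 has_integral 1) {0..1}"
    using cont m1(4) m2(4) by (metis has_integral_integral integrable_continuous_real)+
  have "((\<lambda>y. m1 y - m2 y) has_integral 0) {0..1}"
    using has_integral_diff[OF mass] by simp
  moreover have "((\<lambda>y. cos (2 * pi * y) * (m1 y - m2 y)) has_integral dC) {0..1}"
    "((\<lambda>y. sin (2 * pi * y) * (m1 y - m2 y)) has_integral dS) {0..1}"
    using has_integral_diff[OF has_integral_moments(1)[OF cont(1)] has_integral_moments(1)[OF cont(2)]]
      has_integral_diff[OF has_integral_moments(2)[OF cont(1)] has_integral_moments(2)[OF cont(2)]]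
    by (simp_all add: dC_def dS_def right_diff_distrib)
  ultimately have "((\<lambda>y. trig_poly1 (H1 - H2) (p1 * dC - q1 * dS) (q1 * dC + p1 * dS) y * (m1 y - m2 y))
      has_integral (H1 - H2) * 0 + (p1 * dC - q1 * dS) * dC + (q1 * dC + p1 * dS) * dS) {0..1}"
    by (rule has_integral_trig_poly1_mult)
  then have "((\<lambda>y. 2 / j\<^sup>2 * (trig_poly1 (H1 - H2) (p1 * dC - q1 * dS) (q1 * dC + p1 * dS) y * (m1 y - m2 y)))
      has_integral 2 / j\<^sup>2 * (p1 * (dC\<^sup>2 + dS\<^sup>2))) {0..1}"
    by (intro has_integral_mult_right) (simp add: algebra_simps power2_eq_square)
  then have "((\<lambda>y. (1 / m1 y - 1 / m2 y) * (m1 y - m2 y)) has_integral 2 / j\<^sup>2 * (p1 * (dC\<^sup>2 + dS\<^sup>2))) {0..1}"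
    unfolding recip by (simp only: mult.assoc)
  moreover have "2 / j\<^sup>2 * (p1 * (dC\<^sup>2 + dS\<^sup>2)) \<ge> 0"
    using \<open>p1 \<ge> 0\<close> by simp
  ultimately have "m1 x = m2 x" if "x \<in> {0..1}" for x
    using cont m1(3) m2(3) that by (intro eq_if_has_integral_reciprocal_gap_nonneg) auto
  then have "m1 = m2"
    using periodic1_eqI m1(2) m2(2) by blast
  moreover from this have "H1 = H2"
    using eq1[of 0] eq2[of 0] by (simp add: trig_poly1_def)
  ultimately show ?thesis ..
qed

section \<open>Existence\<close>

text \<open>In complex notation: \<open>a + i b = k (v + i w) / (A + i q)\<close>.\<close>

lemma rotation_system_solution:
  fixes A q v w k :: real
  assumes "A\<^sup>2 + q\<^sup>2 \<noteq> 0"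
    and a: "a = k * (v * A + w * q) / (A\<^sup>2 + q\<^sup>2)" and b: "b = k * (w * A - v * q) / (A\<^sup>2 + q\<^sup>2)"
  shows "A * a - q * b = k * v" "A * b + q * a = k * w"
    and "a\<^sup>2 + b\<^sup>2 = k\<^sup>2 * (v\<^sup>2 + w\<^sup>2) / (A\<^sup>2 + q\<^sup>2)"
proof -
  let ?D = "A\<^sup>2 + q\<^sup>2"
  have aD: "a * ?D = k * (v * A + w * q)" and bD: "b * ?D = k * (w * A - v * q)"
    using assms by simp_all
  have "(A * a - q * b) * ?D = (k * v) * ?D" "(A * b + q * a) * ?D = (k * w) * ?D"
    using aD bD by algebra+
  then show "A * a - q * b = k * v" "A * b + q * a = k * w"
    using \<open>?D \<noteq> 0\<close> by (meson mult_right_cancel)+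
  have "(a\<^sup>2 + b\<^sup>2) * ?D = k\<^sup>2 * (v\<^sup>2 + w\<^sup>2)"
    using aD bD \<open>?D \<noteq> 0\<close> by algebra
  then show "a\<^sup>2 + b\<^sup>2 = k\<^sup>2 * (v\<^sup>2 + w\<^sup>2) / ?D"
    using \<open>?D \<noteq> 0\<close> by (simp add: eq_divide_eq)
qed

lemma solves_P_reciprocal_trig_poly1:
  fixes j p0 p1 q1 v0 v1 w1 r :: real
  assumes "j \<noteq> 0" "p1 \<ge> 0" "r \<ge> 1"
    and root: "(1 - 1 / r) * ((p1 + j\<^sup>2 * r)\<^sup>2 + q1\<^sup>2) = v1\<^sup>2 + w1\<^sup>2"
    and a1: "a1 = - (2 * r * (v1 * (p1 + j\<^sup>2 * r) + w1 * q1)) / ((p1 + j\<^sup>2 * r)\<^sup>2 + q1\<^sup>2)"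
    and b1: "b1 = - (2 * r * (w1 * (p1 + j\<^sup>2 * r) - v1 * q1)) / ((p1 + j\<^sup>2 * r)\<^sup>2 + q1\<^sup>2)"
  shows "solves_P 1 j (trig_poly1 v0 v1 w1) (trig_poly1 p0 p1 q1)
           (\<lambda>x. 1 / trig_poly1 (2 * r - 1) a1 b1 x) (j\<^sup>2 * (2 * r - 1) / 2 + v0 - p0)"
proof -
  define A where "A = p1 + j\<^sup>2 * r"
  have "A > 0"
    using assms(1-3) by (simp add: A_def add_nonneg_pos)
  then have D: "A\<^sup>2 + q1\<^sup>2 \<noteq> 0"
    by (simp add: add_pos_nonneg)
  have "a1 = (- 2 * r) * (v1 * A + w1 * q1) / (A\<^sup>2 + q1\<^sup>2)"
    "b1 = (- 2 * r) * (w1 * A - v1 * q1) / (A\<^sup>2 + q1\<^sup>2)"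
    by (simp_all add: a1 b1 A_def)
  note rot = rotation_system_solution[OF D this]
  have "v1\<^sup>2 + w1\<^sup>2 = (1 - 1 / r) * (A\<^sup>2 + q1\<^sup>2)"
    using root by (simp add: A_def)
  then have "a1\<^sup>2 + b1\<^sup>2 = 4 * r\<^sup>2 * (1 - 1 / r)"
    using rot(3) \<open>A > 0\<close> by (simp add: power_mult_distrib)
  also have "\<dots> = 4 * r\<^sup>2 - 4 * r"
    using \<open>r \<ge> 1\<close> by (simp add: right_diff_distrib power2_eq_square)
  finally have norm: "(2 * r - 1)\<^sup>2 - a1\<^sup>2 - b1\<^sup>2 = 1"
    by (simp add: algebra_simps power2_eq_square)
  have "2 * r - 1 > 0" using \<open>r \<ge> 1\<close> by simp
  let ?L = "trig_poly1 (2 * r - 1) a1 b1"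
  have L_pos: "?L x > 0" for x
    using norm \<open>2 * r - 1 > 0\<close> by (intro trig_poly1_pos) auto
  have moments: "cos_moment (\<lambda>x. 1 / ?L x) = - a1 / (2 * r)" "sin_moment (\<lambda>x. 1 / ?L x) = - b1 / (2 * r)"
    using has_integral_trig_div_trig_poly1[OF norm \<open>2 * r - 1 > 0\<close>]
    by (simp_all add: cos_moment_def sin_moment_def integral_unique)
  have coeffs: "p1 * (- a1 / (2 * r)) - q1 * (- b1 / (2 * r)) - v1 = j\<^sup>2 / 2 * a1"
    "q1 * (- a1 / (2 * r)) + p1 * (- b1 / (2 * r)) - w1 = j\<^sup>2 / 2 * b1"
    using rot(1,2) \<open>r \<ge> 1\<close> by (simp_all add: A_def field_simps)
  have "j\<^sup>2 / (2 * (1 / ?L x)) = trig_poly1 (p0 + (j\<^sup>2 * (2 * r - 1) / 2 + v0 - p0) - v0)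
      (p1 * cos_moment (\<lambda>x. 1 / ?L x) - q1 * sin_moment (\<lambda>x. 1 / ?L x) - v1)
      (q1 * cos_moment (\<lambda>x. 1 / ?L x) + p1 * sin_moment (\<lambda>x. 1 / ?L x) - w1) x" for x
    unfolding moments coeffs by (simp add: trig_poly1_def field_simps)
  moreover have "continuous_on UNIV (\<lambda>x. 1 / ?L x)"
    using L_pos by (auto intro!: continuous_intros simp: less_imp_neq[symmetric])
  moreover have "periodic1 (\<lambda>x. 1 / ?L x)"
    by (simp add: periodic1_def trig_poly1_periodic)
  moreover have "integral {0..1} (\<lambda>x. 1 / ?L x) = 1"
    using has_integral_inverse_trig_poly1[OF norm \<open>2 * r - 1 > 0\<close>] by (rule integral_unique)
  ultimately show ?thesis
    using L_pos by (subst solves_P_trig_poly1_iff) auto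
qed

lemma strict_mono_on_root_equation:
  fixes j p1 q1 :: real
  assumes "j \<noteq> 0" "p1 \<ge> 0"
  shows "strict_mono_on {1..} (\<lambda>r. (1 - 1 / r) * ((p1 + j\<^sup>2 * r)\<^sup>2 + q1\<^sup>2))"
proof (rule strict_mono_onI)
  fix r s :: real
  assume "r \<in> {1..}" "s \<in> {1..}" "r < s"
  then have "0 \<le> 1 - 1 / r" "1 - 1 / r < 1 - 1 / s"
    by (auto simp: frac_less2)
  moreover have "0 \<le> p1 + j\<^sup>2 * r" "p1 + j\<^sup>2 * r \<le> p1 + j\<^sup>2 * s"
    using \<open>r \<in> {1..}\<close> \<open>r < s\<close> assms by auto
  then have "(p1 + j\<^sup>2 * r)\<^sup>2 + q1\<^sup>2 \<le> (p1 + j\<^sup>2 * s)\<^sup>2 + q1\<^sup>2"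
    by (simp add: power_mono)
  moreover have "p1 + j\<^sup>2 * s > 0"
    using \<open>s \<in> {1..}\<close> assms by (simp add: add_nonneg_pos)
  then have "(p1 + j\<^sup>2 * s)\<^sup>2 + q1\<^sup>2 > 0"
    by (simp add: add_pos_nonneg)
  ultimately show "(1 - 1 / r) * ((p1 + j\<^sup>2 * r)\<^sup>2 + q1\<^sup>2) < (1 - 1 / s) * ((p1 + j\<^sup>2 * s)\<^sup>2 + q1\<^sup>2)"
    by (meson mult_left_mono mult_strict_right_mono order_le_less_trans)
qed

lemma ex1_root_equation:
  fixes j p1 q1 K :: real
  assumes "j \<noteq> 0" "p1 \<ge> 0" "K \<ge> 0"
  shows "\<exists>!r. r \<ge> 1 \<and> (1 - 1 / r) * ((p1 + j\<^sup>2 * r)\<^sup>2 + q1\<^sup>2) = K"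
proof -
  define f where "f r = (1 - 1 / r) * ((p1 + j\<^sup>2 * r)\<^sup>2 + q1\<^sup>2)" for r :: real
  define R where "R = 2 + K / (j\<^sup>2)\<^sup>2"
  have "R \<ge> 2" and j4: "(j\<^sup>2)\<^sup>2 > 0"
    using assms by (simp_all add: R_def)
  have "K \<le> (j\<^sup>2)\<^sup>2 * R"
    using j4 by (simp add: R_def field_simps)
  also have "\<dots> \<le> (1 / 2) * (j\<^sup>2 * R)\<^sup>2"
  proof -
    have "(j\<^sup>2)\<^sup>2 * (2 * R) \<le> (j\<^sup>2)\<^sup>2 * (R * R)"
      using \<open>R \<ge> 2\<close> by (intro mult_left_mono mult_right_mono) auto
    then show ?thesis by (simp add: power2_eq_square algebra_simps)
  qed
  also have "\<dots> \<le> f R"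
  proof -
    have "(j\<^sup>2 * R)\<^sup>2 \<le> (p1 + j\<^sup>2 * R)\<^sup>2 + q1\<^sup>2"
      using assms \<open>R \<ge> 2\<close> by (simp add: power_mono add_increasing2)
    moreover have "1 / 2 \<le> 1 - 1 / R"
      using \<open>R \<ge> 2\<close> by (simp add: field_simps)
    ultimately show ?thesis
      unfolding f_def by (intro mult_mono) auto
  qed
  finally have "K \<le> f R" .
  moreover have "f 1 \<le> K" "continuous_on {1..R} f"
    using \<open>K \<ge> 0\<close> unfolding f_def by (auto intro!: continuous_intros)
  ultimately obtain r where "r \<in> {1..R}" "f r = K"
    using IVT'[of f 1 K R] \<open>R \<ge> 2\<close> by auto
  moreover have "strict_mono_on {1..} f"
    unfolding f_def using strict_mono_on_root_equation[OF assms(1,2)] .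
  ultimately show ?thesis
    unfolding f_def[symmetric] by (intro ex1I[of _ r]) (auto dest: strict_mono_on_eqD)
qed

theorem theorem1p3:
  fixes j p0 p1 q1 v0 v1 w1 :: real
  assumes "j \<noteq> 0" and "p0 > 0" and "p1 \<ge> 0"
  shows "(\<exists>!r::real. r \<ge> 1 \<and> (1 - 1 / r) * ((p1 + j\<^sup>2 * r)\<^sup>2 + q1\<^sup>2) = v1\<^sup>2 + w1\<^sup>2)
    \<and> (\<forall>r::real. r \<ge> 1 \<and> (1 - 1 / r) * ((p1 + j\<^sup>2 * r)\<^sup>2 + q1\<^sup>2) = v1\<^sup>2 + w1\<^sup>2 \<longrightarrow>
        (let G = (\<lambda>x. p0 + p1 * cos (2 * pi * x) + q1 * sin (2 * pi * x));
             V = (\<lambda>x. v0 + v1 * cos (2 * pi * x) + w1 * sin (2 * pi * x));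
             D = (p1 + j\<^sup>2 * r)\<^sup>2 + q1\<^sup>2;
             a0 = 2 * r - 1;
             H = j\<^sup>2 * (2 * r - 1) / 2 + v0 - p0;
             a1 = - (2 * r * (v1 * (p1 + j\<^sup>2 * r) + w1 * q1)) / D;
             b1 = - (2 * r * (w1 * (p1 + j\<^sup>2 * r) - v1 * q1)) / D;
             m = (\<lambda>x. 1 / (a0 + a1 * cos (2 * pi * x) + b1 * sin (2 * pi * x)))
         in solves_P 1 j V G m H \<and>
            (\<forall>m' H'. solves_P 1 j V G m' H' \<longrightarrow> m' = m \<and> H' = H)))"
proof (intro conjI allI impI)
  show "\<exists>!r::real. r \<ge> 1 \<and> (1 - 1 / r) * ((p1 + j\<^sup>2 * r)\<^sup>2 + q1\<^sup>2) = v1\<^sup>2 + w1\<^sup>2"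
    by (rule ex1_root_equation[OF assms(1,3)]) simp
next
  fix r :: real
  assume r: "r \<ge> 1 \<and> (1 - 1 / r) * ((p1 + j\<^sup>2 * r)\<^sup>2 + q1\<^sup>2) = v1\<^sup>2 + w1\<^sup>2"
  note solution = solves_P_reciprocal_trig_poly1[OF assms(1,3) conjunct1[OF r] conjunct2[OF r] refl refl]
  show "let G = (\<lambda>x. p0 + p1 * cos (2 * pi * x) + q1 * sin (2 * pi * x));
             V = (\<lambda>x. v0 + v1 * cos (2 * pi * x) + w1 * sin (2 * pi * x));
             D = (p1 + j\<^sup>2 * r)\<^sup>2 + q1\<^sup>2;
             a0 = 2 * r - 1;
             H = j\<^sup>2 * (2 * r - 1) / 2 + v0 - p0;
             a1 = - (2 * r * (v1 * (p1 + j\<^sup>2 * r) + w1 * q1)) / D;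
             b1 = - (2 * r * (w1 * (p1 + j\<^sup>2 * r) - v1 * q1)) / D;
             m = (\<lambda>x. 1 / (a0 + a1 * cos (2 * pi * x) + b1 * sin (2 * pi * x)))
         in solves_P 1 j V G m H \<and>
            (\<forall>m' H'. solves_P 1 j V G m' H' \<longrightarrow> m' = m \<and> H' = H)"
    unfolding Let_def trig_poly1_def[symmetric]
    using solution solves_P_trig_poly1_unique[OF assms(1,3) _ solution] by blast
qed

end
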